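(* Let $\chi,b,\nu,\mu>0$ with $b\ge\frac32\chi\mu$, and $c\in\mathbb{R}$. Let $r$ be globally Hölder continuous and bounded with finite limits $r(\pm\infty)$, $r(-\infty)<0<r(\infty)$ and $r(-\infty)\le r(x)\le r(\infty)$ for all $x$; put $r^*=\sup r=r(\infty)$. Fix $r_1$ with $r(-\infty)<r_1<0$, a point $x_1$ with $r(x)\le r_1$ for all $x\le x_1$, and let $\theta_1$ be the positive root of $\theta^2+c\theta+r_1=0$. Then for every $u\in\mathcal{E}_1^+$: $$\mathcal{A}_u\Big(\frac{r^*}{b-\chi\mu}\Big)(x)\le0\ \text{ for all }x\in\mathbb{R},\qquad \mathcal{A}_u\Big(\frac{r^*}{b-\chi\mu}e^{\theta_1(\cdot-x_1)}\Big)(x)\le 0\ \text{ for all }x\in(-\infty,x_1).$$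
   Context: $C^b_{\rm unif}(\mathbb{R})$: bounded uniformly continuous functions on $\mathbb{R}$. For $u\in C^b_{\rm unif}(\mathbb{R})$, $\Psi(x;u)=\frac{\mu}{2\sqrt\nu}\int_{\mathbb{R}}e^{-\sqrt\nu|x-y|}u(y)\,dy$ (the bounded solution of $\Psi''-\nu\Psi+\mu u=0$). $U_1^+(x)=\min\{\frac{r^*}{b-\chi\mu},\frac{r^*}{b-\chi\mu}e^{\theta_1(x-x_1)}\}$ and $\mathcal{E}_1^+=\{u\in C^b_{\rm unif}(\mathbb{R}):0\le u(x)\le U_1^+(x)\ \forall x\}$. For $u\in\mathcal{E}_1^+$ and $U\in C^2$, $$\mathcal{A}_u(U)(x)=U_{xx}+(c-\chi\Psi_x(x;u))U_x+(r(x)-\chi\nu\Psi(x;u)-(b-\chi\mu)U)U.$$ *)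

theory Defs
  imports "HOL-Analysis.Analysis"
begin

definition Cb_unif :: "(real \<Rightarrow> real) set" where
  "Cb_unif = {u. bounded (range u) \<and> uniformly_continuous_on UNIV u}"

definition globally_hoelder :: "(real \<Rightarrow> real) \<Rightarrow> bool" where
  "globally_hoelder f \<longleftrightarrow>
     (\<exists>C \<alpha>. 0 < \<alpha> \<and> \<alpha> \<le> 1 \<and> (\<forall>x y. \<bar>f x - f y\<bar> \<le> C * \<bar>x - y\<bar> powr \<alpha>))"

definition Psi :: "real \<Rightarrow> real \<Rightarrow> (real \<Rightarrow> real) \<Rightarrow> real \<Rightarrow> real" where
  "Psi \<nu> \<mu> u x = \<mu> / (2 * sqrt \<nu>) *
     (\<integral>y. exp (- sqrt \<nu> * \<bar>x - y\<bar>) * u y \<partial>lborel)"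

definition U1plus :: "real \<Rightarrow> real \<Rightarrow> real \<Rightarrow> real \<Rightarrow> real \<Rightarrow> real \<Rightarrow> real \<Rightarrow> real" where
  "U1plus rstar b chi \<mu> \<theta>1 x1 x =
     min (rstar / (b - chi * \<mu>)) (rstar / (b - chi * \<mu>) * exp (\<theta>1 * (x - x1)))"

definition E1plus :: "real \<Rightarrow> real \<Rightarrow> real \<Rightarrow> real \<Rightarrow> real \<Rightarrow> real \<Rightarrow> (real \<Rightarrow> real) set" where
  "E1plus rstar b chi \<mu> \<theta>1 x1 =
     {u \<in> Cb_unif. \<forall>x. 0 \<le> u x \<and> u x \<le> U1plus rstar b chi \<mu> \<theta>1 x1 x}"

definition A_op :: "real \<Rightarrow> real \<Rightarrow> real \<Rightarrow> real \<Rightarrow> real \<Rightarrow> (real \<Rightarrow> real)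
      \<Rightarrow> (real \<Rightarrow> real) \<Rightarrow> (real \<Rightarrow> real) \<Rightarrow> real \<Rightarrow> real" where
  "A_op chi \<nu> \<mu> b c r u U x =
     deriv (deriv U) x
     + (c - chi * deriv (Psi \<nu> \<mu> u) x) * deriv U x
     + (r x - chi * \<nu> * Psi \<nu> \<mu> u x - (b - chi * \<mu>) * U x) * U x"

end

theory Submission
  imports Defs
begin

text \<open>
  The constant \<open>K = r\<^sup>*/(b - \<chi>\<mu>)\<close> is a supersolution because \<open>r \<le> r\<^sup>*\<close> and \<open>\<Psi> \<ge> 0\<close>.
  For \<open>U(x) = K exp(\<theta>(x - x\<^sub>1))\<close> one has
  \<open>A\<^sub>u(U) = U (\<theta>\<^sup>2 + c\<theta> + r - \<chi>\<theta>\<Psi>' - \<chi>\<nu>\<Psi> - (b - \<chi>\<mu>) U)\<close>.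
  Splitting the kernel \<open>exp(-a|x - y|)\<close>, \<open>a = \<surd>\<nu>\<close>, at \<open>y = x\<close> gives
  \<open>\<Psi>'(x) = \<mu>/2 (exp(ax) \<integral>\<^sub>x\<^sup>\<infinity> exp(-ay) u(y) dy - exp(-ax) \<integral>\<^sub>-\<^sub>\<infinity>\<^sup>x exp(ay) u(y) dy)\<close>.
  The first term is nonnegative and, as \<open>u \<le> U\<close> left of \<open>x\<close>, the second is at most
  \<open>U(x)/(a + \<theta>)\<close>, hence
  \<open>-\<chi>\<theta>\<Psi>' \<le> \<chi>\<mu>U/2 \<le> (b - \<chi>\<mu>) U\<close> by \<open>b \<ge> 3\<chi>\<mu>/2\<close>.
  What remains is \<open>\<theta>\<^sup>2 + c\<theta> + r \<le> \<theta>\<^sup>2 + c\<theta> + r\<^sub>1 = 0\<close> for \<open>x < x\<^sub>1\<close>.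
\<close>

lemma exp_lessThan_integral:
  fixes c x :: real
  assumes c: "c > 0"
  shows "set_integrable lborel {..<x} (\<lambda>y. exp (c * y))"
    and "(LBINT y:{..<x}. exp (c * y)) = exp (c * x) / c"
proof -
  have "((\<lambda>y. exp (c * y)) \<longlongrightarrow> 0) at_bot"
    using c by (auto intro!: exp_at_bot[THEN filterlim_compose]
        filterlim_tendsto_pos_mult_at_bot filterlim_ident)
  then have lim: "((\<lambda>y. exp (c * y) / c) \<longlongrightarrow> 0) at_bot"
    using tendsto_divide[OF _ tendsto_const[of c]] c by fastforce
  note FTC = interval_integral_FTC_nonneg[of "-\<infinity>" "ereal x" "\<lambda>y. exp (c * y) / c"
      "\<lambda>y. exp (c * y)" 0 "exp (c * x) / c"]
  have "set_integrable lborel (einterval (-\<infinity>) (ereal x)) (\<lambda>y. exp (c * y))"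
    "(LBINT y=-\<infinity>..ereal x. exp (c * y)) = exp (c * x) / c - 0"
    by (rule FTC; use c lim in \<open>auto intro!: derivative_eq_intros tendsto_intros
        simp: ereal_tendsto_simps\<close>)+
  then show "set_integrable lborel {..<x} (\<lambda>y. exp (c * y))"
    "(LBINT y:{..<x}. exp (c * y)) = exp (c * x) / c"
    by (auto simp: interval_lebesgue_integral_le_eq)
qed

lemma set_integrable_exp_greaterThan:
  fixes c x :: real
  assumes c: "c > 0"
  shows "set_integrable lborel {x<..} (\<lambda>y. exp (- c * y))"
proof -
  have "((\<lambda>y. exp (- c * y)) \<longlongrightarrow> 0) at_top"
    using c by (auto intro!: exp_at_bot[THEN filterlim_compose]
        filterlim_tendsto_pos_mult_at_top filterlim_ident
        simp: filterlim_uminus_at_bot mult.commute[of _ c])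
  then have lim: "((\<lambda>y. - exp (- c * y) / c) \<longlongrightarrow> 0) at_top"
    using tendsto_minus[OF tendsto_divide[OF _ tendsto_const[of c]]] c by fastforce
  have "set_integrable lborel (einterval (ereal x) \<infinity>) (\<lambda>y. exp (- c * y))"
    by (rule interval_integral_FTC_nonneg[of "ereal x" "\<infinity>" "\<lambda>y. - exp (- c * y) / c"
          "\<lambda>y. exp (- c * y)" "- exp (- c * x) / c" 0])
      (use c lim in \<open>auto intro!: derivative_eq_intros tendsto_intros
          simp: ereal_tendsto_simps\<close>)
  then show ?thesis by simp
qed

lemma set_integrable_mult_bounded:
  fixes u w :: "real \<Rightarrow> real"
  assumes w: "set_integrable lborel A w" "w \<in> borel_measurable lborel" and A: "A \<in> sets lborel"
    and u: "u \<in> borel_measurable lborel" "bounded (range u)"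
  shows "set_integrable lborel A (\<lambda>y. w y * u y)"
proof -
  obtain K where K: "\<And>y. \<bar>u y\<bar> \<le> K"
    using u(2) by (auto simp: bounded_real)
  show ?thesis
  proof (rule set_integrable_bound[where f="\<lambda>y. w y * K"])
    show "set_integrable lborel A (\<lambda>y. w y * K)"
      using set_integrable_mult_left[OF w(1)] by simp
    show "set_borel_measurable lborel A (\<lambda>y. w y * u y)"
      unfolding set_borel_measurable_def using w(2) u(1) A by measurable
    show "AE y in lborel. y \<in> A \<longrightarrow> norm (w y * u y) \<le> norm (w y * K)"
    proof (intro AE_I2 impI)
      fix y
      have "\<bar>u y\<bar> \<le> \<bar>K\<bar>" using K[of y] by linarith
      then show "norm (w y * u y) \<le> norm (w y * K)"
        by (simp add: abs_mult mult_left_mono)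
    qed
  qed
qed

lemma interval_integral_has_real_derivative:
  fixes g :: "real \<Rightarrow> real"
  assumes "continuous_on UNIV g"
  shows "((\<lambda>t. LBINT y=ereal c..ereal t. g y) has_real_derivative g x) (at x)"
proof -
  define lo hi where "lo = min c x - 1" and "hi = max c x + 1"
  have "((\<lambda>t. LBINT y=c..t. g y) has_vector_derivative g x) (at x within {lo..hi})"
    by (rule interval_integral_FTC2)
      (auto simp: lo_def hi_def intro: continuous_on_subset[OF assms])
  then have "((\<lambda>t. LBINT y=c..t. g y) has_vector_derivative g x) (at x within {lo<..<hi})"
    by (rule has_vector_derivative_within_subset) auto
  moreover have "at x within {lo<..<hi} = at x"
    by (rule at_within_open) (auto simp: lo_def hi_def)
  ultimately show ?thesis
    by (simp add: has_real_derivative_iff_has_vector_derivative)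
qed

lemma lessThan_integral_has_real_derivative:
  fixes g :: "real \<Rightarrow> real"
  assumes "continuous_on UNIV g" and int: "\<And>c. set_integrable lborel {..<c} g"
  shows "((\<lambda>t. LBINT y:{..<t}. g y) has_real_derivative g x) (at x)"
proof -
  have split: "(LBINT y:{..<t}. g y) = (LBINT y:{..<0}. g y) + (LBINT y=ereal 0..ereal t. g y)" for t
  proof -
    have "interval_lebesgue_integrable lborel
        (min (-\<infinity>) (min (ereal 0) (ereal t))) (max (-\<infinity>) (max (ereal 0) (ereal t))) g"
      using int by (simp add: interval_lebesgue_integrable_def max_def)
    then have "(LBINT y=-\<infinity>..ereal 0. g y) + (LBINT y=ereal 0..ereal t. g y) = (LBINT y=-\<infinity>..ereal t. g y)"
      by (rule interval_integral_sum)
    moreover have "(LBINT y=-\<infinity>..ereal s. g y) = (LBINT y:{..<s}. g y)" for s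
      by (simp add: interval_lebesgue_integral_le_eq)
    ultimately show ?thesis by simp
  qed
  then have "(\<lambda>t. LBINT y:{..<t}. g y) = (\<lambda>t. (LBINT y:{..<0}. g y) + (LBINT y=ereal 0..ereal t. g y))"
    by (intro ext split)
  with DERIV_add[OF DERIV_const interval_integral_has_real_derivative[OF assms(1)]]
  show ?thesis by simp
qed

lemma greaterThan_integral_has_real_derivative:
  fixes g :: "real \<Rightarrow> real"
  assumes "continuous_on UNIV g" and int: "\<And>c. set_integrable lborel {c<..} g"
  shows "((\<lambda>t. LBINT y:{t<..}. g y) has_real_derivative - g x) (at x)"
proof -
  have split: "(LBINT y:{t<..}. g y) = (LBINT y:{0<..}. g y) - (LBINT y=ereal 0..ereal t. g y)" for t
  proof -
    have "interval_lebesgue_integrable lborel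
        (min (ereal t) (min (ereal 0) \<infinity>)) (max (ereal t) (max (ereal 0) \<infinity>)) g"
      using int by (simp add: interval_lebesgue_integrable_def min_def)
    then have "(LBINT y=ereal t..ereal 0. g y) + (LBINT y=ereal 0..\<infinity>. g y) = (LBINT y=ereal t..\<infinity>. g y)"
      by (rule interval_integral_sum)
    moreover have "(LBINT y=ereal s..\<infinity>. g y) = (LBINT y:{s<..}. g y)" for s
      by (simp add: interval_lebesgue_integral_le_eq)
    moreover have "(LBINT y=ereal t..ereal 0. g y) = - (LBINT y=ereal 0..ereal t. g y)"
      by (rule interval_integral_endpoints_reverse)
    ultimately show ?thesis by simp
  qed
  then have "(\<lambda>t. LBINT y:{t<..}. g y) = (\<lambda>t. (LBINT y:{0<..}. g y) - (LBINT y=ereal 0..ereal t. g y))"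
    by (intro ext split)
  with DERIV_diff[OF DERIV_const interval_integral_has_real_derivative[OF assms(1)]]
  show ?thesis by simp
qed

lemma set_integrable_laplace_tails:
  fixes a x :: real and u :: "real \<Rightarrow> real"
  assumes a: "a > 0" and u: "u \<in> borel_measurable lborel" "bounded (range u)"
  shows "set_integrable lborel {..<x} (\<lambda>y. exp (a * y) * u y)"
    and "set_integrable lborel {x<..} (\<lambda>y. exp (- a * y) * u y)"
  using exp_lessThan_integral(1)[OF a] set_integrable_exp_greaterThan[OF a] u
  by (auto intro!: set_integrable_mult_bounded)

lemma laplace_kernel_integral_split:
  fixes a x :: real and u :: "real \<Rightarrow> real"
  assumes a: "a > 0" and u: "u \<in> borel_measurable lborel" "bounded (range u)"
  shows "(\<integral>y. exp (- a * \<bar>x - y\<bar>) * u y \<partial>lborel) =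
    exp (- a * x) * (LBINT y:{..<x}. exp (a * y) * u y)
    + exp (a * x) * (LBINT y:{x<..}. exp (- a * y) * u y)"
proof -
  define f where "f y = exp (- a * \<bar>x - y\<bar>) * u y" for y
  have left: "f y = exp (- a * x) * (exp (a * y) * u y)" if "y \<in> {..<x}" for y
    using that by (simp add: f_def mult_exp_exp algebra_simps)
  have right: "f y = exp (a * x) * (exp (- a * y) * u y)" if "y \<in> {x<..}" for y
    using that by (simp add: f_def mult_exp_exp algebra_simps)
  have intL: "set_integrable lborel {..<x} f"
    using set_integrable_mult_right[OF set_integrable_laplace_tails(1)[OF a u]]
    by (subst set_integrable_cong[OF refl refl left]) auto
  have intR: "set_integrable lborel {x<..} f"
    using set_integrable_mult_right[OF set_integrable_laplace_tails(2)[OF a u]]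
    by (subst set_integrable_cong[OF refl refl right]) auto
  have "(\<integral>y. f y \<partial>lborel) = (LBINT y:UNIV. f y)"
    by (simp add: set_lebesgue_integral_def)
  also have "\<dots> = (LBINT y:{..<x} \<union> {x<..}. f y)"
    using u unfolding f_def
    by (intro set_integral_cong_set eventually_mono[OF AE_lborel_singleton[of x]])
      (auto simp: set_borel_measurable_def)
  also have "\<dots> = (LBINT y:{..<x}. f y) + (LBINT y:{x<..}. f y)"
    using intL intR by (intro set_integral_Un) auto
  also have "\<dots> = (LBINT y:{..<x}. exp (- a * x) * (exp (a * y) * u y))
      + (LBINT y:{x<..}. exp (a * x) * (exp (- a * y) * u y))"
    using left right by (intro arg_cong2[where f="(+)"] set_lebesgue_integral_cong) auto
  finally show ?thesis by (simp add: f_def)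
qed

lemma laplace_kernel_integral_has_real_derivative:
  fixes a x :: real and u :: "real \<Rightarrow> real"
  assumes a: "a > 0" and u: "continuous_on UNIV u" "bounded (range u)"
  shows "((\<lambda>x. \<integral>y. exp (- a * \<bar>x - y\<bar>) * u y \<partial>lborel) has_real_derivative
      a * (exp (a * x) * (LBINT y:{x<..}. exp (- a * y) * u y)
         - exp (- a * x) * (LBINT y:{..<x}. exp (a * y) * u y))) (at x)"
proof -
  have um: "u \<in> borel_measurable lborel"
    using borel_measurable_continuous_onI[OF u(1)] by simp
  note tails = set_integrable_laplace_tails[OF a um u(2)]
  have dL: "((\<lambda>t. LBINT y:{..<t}. exp (a * y) * u y) has_real_derivative exp (a * x) * u x) (at x)"
    by (rule lessThan_integral_has_real_derivative[OF _ tails(1)])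
      (auto intro!: continuous_intros u)
  have dR: "((\<lambda>t. LBINT y:{t<..}. exp (- a * y) * u y) has_real_derivative - (exp (- a * x) * u x)) (at x)"
    by (rule greaterThan_integral_has_real_derivative[OF _ tails(2)])
      (auto intro!: continuous_intros u)
  have "((\<lambda>t. exp (- a * t) * (LBINT y:{..<t}. exp (a * y) * u y)
      + exp (a * t) * (LBINT y:{t<..}. exp (- a * y) * u y)) has_real_derivative
      a * (exp (a * x) * (LBINT y:{x<..}. exp (- a * y) * u y)
         - exp (- a * x) * (LBINT y:{..<x}. exp (a * y) * u y))) (at x)"
    by (rule derivative_eq_intros dL dR refl)+ (simp add: algebra_simps mult_exp_exp)
  moreover have "(\<lambda>x. \<integral>y. exp (- a * \<bar>x - y\<bar>) * u y \<partial>lborel) =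
      (\<lambda>t. exp (- a * t) * (LBINT y:{..<t}. exp (a * y) * u y)
        + exp (a * t) * (LBINT y:{t<..}. exp (- a * y) * u y))"
    by (intro ext laplace_kernel_integral_split[OF a um u(2)])
  ultimately show ?thesis by simp
qed

lemma lessThan_laplace_tail_le:
  fixes a \<theta> C x :: real and u :: "real \<Rightarrow> real"
  assumes a\<theta>: "a + \<theta> > 0" and int: "set_integrable lborel {..<x} (\<lambda>y. exp (a * y) * u y)"
    and u: "\<And>y. y < x \<Longrightarrow> u y \<le> C * exp (\<theta> * y)"
  shows "exp (- a * x) * (LBINT y:{..<x}. exp (a * y) * u y) \<le> C * exp (\<theta> * x) / (a + \<theta>)"
proof -
  note exp_int = exp_lessThan_integral[OF a\<theta>, of x]
  have "(LBINT y:{..<x}. exp (a * y) * u y) \<le> (LBINT y:{..<x}. C * exp ((a + \<theta>) * y))"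
  proof (rule set_integral_mono[OF int])
    show "set_integrable lborel {..<x} (\<lambda>y. C * exp ((a + \<theta>) * y))"
      using set_integrable_mult_right[OF exp_int(1)] by simp
    fix y assume "y \<in> {..<x}"
    then have "exp (a * y) * u y \<le> exp (a * y) * (C * exp (\<theta> * y))"
      using u by (intro mult_left_mono) auto
    then show "exp (a * y) * u y \<le> C * exp ((a + \<theta>) * y)"
      by (simp add: mult_exp_exp algebra_simps)
  qed
  also have "\<dots> = C * exp ((a + \<theta>) * x) / (a + \<theta>)"
    using exp_int(2) by simp
  finally have "exp (- a * x) * (LBINT y:{..<x}. exp (a * y) * u y)
      \<le> exp (- a * x) * (C * exp ((a + \<theta>) * x) / (a + \<theta>))"
    by (rule mult_left_mono) simp
  also have "\<dots> = C * exp (\<theta> * x) / (a + \<theta>)"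
    by (simp add: mult_exp_exp algebra_simps)
  finally show ?thesis .
qed

lemma Psi_nonneg:
  assumes "\<nu> \<ge> 0" "\<mu> \<ge> 0" "\<And>y. 0 \<le> u y"
  shows "0 \<le> Psi \<nu> \<mu> u x"
  using assms unfolding Psi_def by (auto intro!: mult_nonneg_nonneg integral_nonneg_AE)

lemma deriv_Psi:
  assumes \<nu>: "\<nu> > 0" and u: "continuous_on UNIV u" "bounded (range u)"
  shows "deriv (Psi \<nu> \<mu> u) x = \<mu> / 2 *
    (exp (sqrt \<nu> * x) * (LBINT y:{x<..}. exp (- sqrt \<nu> * y) * u y)
     - exp (- sqrt \<nu> * x) * (LBINT y:{..<x}. exp (sqrt \<nu> * y) * u y))"
proof -
  have a: "sqrt \<nu> > 0" using \<nu> by simp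
  have "(Psi \<nu> \<mu> u has_real_derivative \<mu> / (2 * sqrt \<nu>) * (sqrt \<nu> *
      (exp (sqrt \<nu> * x) * (LBINT y:{x<..}. exp (- sqrt \<nu> * y) * u y)
       - exp (- sqrt \<nu> * x) * (LBINT y:{..<x}. exp (sqrt \<nu> * y) * u y)))) (at x)"
    unfolding Psi_def[abs_def]
    by (intro DERIV_cmult laplace_kernel_integral_has_real_derivative a u)
  then show ?thesis
    using a by (simp add: DERIV_imp_deriv)
qed

lemma deriv_Psi_lower_bound:
  assumes \<nu>: "\<nu> > 0" and \<mu>: "\<mu> \<ge> 0"
    and u: "continuous_on UNIV u" "bounded (range u)" "\<And>y. 0 \<le> u y"
    and \<theta>: "sqrt \<nu> + \<theta> > 0" and u_exp: "\<And>y. y < x \<Longrightarrow> u y \<le> C * exp (\<theta> * y)"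
  shows "- deriv (Psi \<nu> \<mu> u) x \<le> \<mu> / 2 * (C * exp (\<theta> * x) / (sqrt \<nu> + \<theta>))"
proof -
  define a where "a = sqrt \<nu>"
  define L where "L = (LBINT y:{..<x}. exp (a * y) * u y)"
  define R where "R = (LBINT y:{x<..}. exp (- a * y) * u y)"
  have a: "a > 0" using \<nu> by (simp add: a_def)
  have um: "u \<in> borel_measurable lborel"
    using borel_measurable_continuous_onI[OF u(1)] by simp
  have "R \<ge> 0"
    using u(3) by (simp add: R_def set_lebesgue_integral_def integral_nonneg_AE)
  moreover have "exp (- a * x) * L \<le> C * exp (\<theta> * x) / (a + \<theta>)"
    unfolding L_def
    by (rule lessThan_laplace_tail_le[OF _ set_integrable_laplace_tails(1)[OF a um u(2)] u_exp])
      (use \<theta> a_def in auto)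
  moreover have "exp (a * x) * R \<ge> 0" if "R \<ge> 0"
    using that by simp
  ultimately have tails: "exp (- a * x) * L - exp (a * x) * R \<le> C * exp (\<theta> * x) / (a + \<theta>)"
    by linarith
  have "- deriv (Psi \<nu> \<mu> u) x = \<mu> / 2 * (exp (- a * x) * L - exp (a * x) * R)"
    using deriv_Psi[OF \<nu> u(1,2), of \<mu> x] by (simp add: a_def L_def R_def algebra_simps)
  also have "\<dots> \<le> \<mu> / 2 * (C * exp (\<theta> * x) / (a + \<theta>))"
    using \<mu> tails by (intro mult_left_mono) auto
  finally show ?thesis by (simp add: a_def)
qed

lemma A_op_const_nonpos:
  assumes "chi \<ge> 0" "\<nu> \<ge> 0" "\<mu> \<ge> 0" "\<And>y. 0 \<le> u y"
    and "K \<ge> 0" "r x \<le> (b - chi * \<mu>) * K"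
  shows "A_op chi \<nu> \<mu> b c r u (\<lambda>_. K) x \<le> 0"
proof -
  have "chi * \<nu> * Psi \<nu> \<mu> u x \<ge> 0"
    using assms Psi_nonneg by simp
  then have "r x - chi * \<nu> * Psi \<nu> \<mu> u x - (b - chi * \<mu>) * K \<le> 0"
    using assms(6) by linarith
  with \<open>K \<ge> 0\<close> show ?thesis
    by (simp add: A_op_def mult_nonpos_nonneg)
qed

lemma A_op_exp:
  "A_op chi \<nu> \<mu> b c r u (\<lambda>y. K * exp (\<theta> * (y - x0))) x =
    K * exp (\<theta> * (x - x0)) * (\<theta>\<^sup>2 + c * \<theta> + r x - chi * \<theta> * deriv (Psi \<nu> \<mu> u) x
      - chi * \<nu> * Psi \<nu> \<mu> u x - (b - chi * \<mu>) * (K * exp (\<theta> * (x - x0))))"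
proof -
  have "deriv (\<lambda>y. K * exp (\<theta> * (y - x0))) = (\<lambda>y. \<theta> * (K * exp (\<theta> * (y - x0))))"
    by (intro ext DERIV_imp_deriv) (auto intro!: derivative_eq_intros)
  moreover have "deriv (\<lambda>y. \<theta> * (K * exp (\<theta> * (y - x0)))) x = \<theta> * (\<theta> * (K * exp (\<theta> * (x - x0))))"
    by (intro DERIV_imp_deriv) (auto intro!: derivative_eq_intros)
  ultimately show ?thesis
    by (simp add: A_op_def power2_eq_square algebra_simps)
qed

lemma A_op_exp_nonpos:
  assumes chi: "chi \<ge> 0" and \<nu>: "\<nu> > 0" and \<mu>: "\<mu> \<ge> 0" and b: "3/2 * chi * \<mu> \<le> b"
    and u: "continuous_on UNIV u" "bounded (range u)" "\<And>y. 0 \<le> u y"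
    and K: "K \<ge> 0" and \<theta>: "\<theta> \<ge> 0" and u_exp: "\<And>y. y < x \<Longrightarrow> u y \<le> K * exp (\<theta> * (y - x0))"
    and root: "\<theta>\<^sup>2 + c * \<theta> + r x \<le> 0"
  shows "A_op chi \<nu> \<mu> b c r u (\<lambda>y. K * exp (\<theta> * (y - x0))) x \<le> 0"
proof -
  define U where "U = K * exp (\<theta> * (x - x0))"
  have U: "U \<ge> 0" using K by (simp add: U_def)
  have a\<theta>: "sqrt \<nu> + \<theta> > 0" using \<nu> \<theta> by (simp add: add_pos_nonneg)
  have deriv_bound: "- deriv (Psi \<nu> \<mu> u) x \<le> \<mu> / 2 * (U / (sqrt \<nu> + \<theta>))"
    using deriv_Psi_lower_bound[OF \<nu> \<mu> u a\<theta>, of x "K * exp (- \<theta> * x0)"] u_exp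
    by (simp add: U_def mult_exp_exp algebra_simps)
  have "- (chi * \<theta> * deriv (Psi \<nu> \<mu> u) x) = chi * \<theta> * (- deriv (Psi \<nu> \<mu> u) x)"
    by simp
  also have "\<dots> \<le> chi * \<theta> * (\<mu> / 2 * (U / (sqrt \<nu> + \<theta>)))"
    using chi \<theta> deriv_bound by (intro mult_left_mono) auto
  also have "\<dots> = chi * \<mu> / 2 * (U * (\<theta> / (sqrt \<nu> + \<theta>)))"
    by simp
  also have "\<dots> \<le> chi * \<mu> / 2 * U"
    using chi \<mu> U \<nu> \<theta> a\<theta> by (intro mult_left_mono mult_right_le_one_le) (auto simp: divide_le_eq_1)
  also have "\<dots> \<le> (b - chi * \<mu>) * U"
    using b U by (intro mult_right_mono) (auto simp: mult.commute)
  finally have gradient: "- (chi * \<theta> * deriv (Psi \<nu> \<mu> u) x) \<le> (b - chi * \<mu>) * U" .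
  have "chi * \<nu> * Psi \<nu> \<mu> u x \<ge> 0"
    using chi \<nu> \<mu> u(3) Psi_nonneg by simp
  with gradient root have "\<theta>\<^sup>2 + c * \<theta> + r x - chi * \<theta> * deriv (Psi \<nu> \<mu> u) x
      - chi * \<nu> * Psi \<nu> \<mu> u x - (b - chi * \<mu>) * U \<le> 0"
    by linarith
  with U show ?thesis
    by (simp add: A_op_exp U_def mult_nonneg_nonpos)
qed

theorem lemma3p1:
  fixes chi b \<nu> \<mu> c rm rp rstar r1 x1 \<theta>1 :: real and r :: "real \<Rightarrow> real"
  assumes "chi > 0" "b > 0" "\<nu> > 0" "\<mu> > 0" "b \<ge> 3/2 * chi * \<mu>"
    and "globally_hoelder r" "bounded (range r)"
    and "(r \<longlongrightarrow> rm) at_bot" "(r \<longlongrightarrow> rp) at_top"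
    and "rm < 0" "0 < rp" "\<And>x. rm \<le> r x \<and> r x \<le> rp"
    and "rstar = (SUP x. r x)"
    and "rm < r1" "r1 < 0" "\<And>x. x \<le> x1 \<Longrightarrow> r x \<le> r1"
    and "\<theta>1 > 0" "\<theta>1\<^sup>2 + c * \<theta>1 + r1 = 0"
    and "u \<in> E1plus rstar b chi \<mu> \<theta>1 x1"
  shows "(\<forall>x. A_op chi \<nu> \<mu> b c r u (\<lambda>_. rstar / (b - chi * \<mu>)) x \<le> 0)
    \<and> (\<forall>x < x1. A_op chi \<nu> \<mu> b c r u
          (\<lambda>y. rstar / (b - chi * \<mu>) * exp (\<theta>1 * (y - x1))) x \<le> 0)"
proof -
  define K where "K = rstar / (b - chi * \<mu>)"
  have "0 < chi * \<mu>"
    using assms(1,4) by simp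
  with assms(5) have "b - chi * \<mu> > 0"
    by linarith
  from assms(19) have "u \<in> Cb_unif" and u_U1: "\<And>y. 0 \<le> u y \<and> u y \<le> U1plus rstar b chi \<mu> \<theta>1 x1 y"
    by (simp_all add: E1plus_def)
  then have u: "continuous_on UNIV u" "bounded (range u)" "\<And>y. 0 \<le> u y"
    by (simp_all add: Cb_unif_def uniformly_continuous_imp_continuous)
  from u_U1 have u_K: "\<And>y. u y \<le> K" and u_exp: "\<And>y. u y \<le> K * exp (\<theta>1 * (y - x1))"
    by (simp_all add: U1plus_def K_def)
  have K: "K \<ge> 0"
    using u(3) u_K by (meson order_trans)
  have "r x \<le> rstar" for x
    unfolding assms(13) using assms(7) by (intro cSUP_upper bounded_imp_bdd_above) auto
  with \<open>b - chi * \<mu> > 0\<close> have "A_op chi \<nu> \<mu> b c r u (\<lambda>_. K) x \<le> 0" for x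
    using assms(1,3,4) u(3) K by (intro A_op_const_nonpos) (simp_all add: K_def)
  moreover have "A_op chi \<nu> \<mu> b c r u (\<lambda>y. K * exp (\<theta>1 * (y - x1))) x \<le> 0" if "x < x1" for x
  proof (rule A_op_exp_nonpos[OF _ _ _ _ u K])
    show "\<theta>1\<^sup>2 + c * \<theta>1 + r x \<le> 0"
      using assms(16)[of x] assms(18) that by linarith
  qed (use assms(1-5,17) u_exp in auto)
  ultimately show ?thesis
    by (simp add: K_def)
qed

end
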